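(* Suppose $\frac{\partial F_2}{\partial S}(S,I_2)\le I_2$ for all $S,I_2\ge0$. Then the model admits a unique single-strain ($I_2$)-infection equilibrium $E_2=(\tilde S,\tilde V_1,0,\tilde I_2)$ with $\tilde S,\tilde V_1,\tilde I_2>0$ if and only if $\mathcal{R}_2>1$.
   Context: The model is $\dot S=\Lambda-F_1(S,I_1)-F_2(S,I_2)-\lambda S$, $\dot V_1=rS-(\mu+kI_2)V_1$, $\dot I_1=F_1(S,I_1)-\alpha_1I_1$, $\dot I_2=F_2(S,I_2)+kI_2V_1-\alpha_2I_2$ on $\mathbb{R}^4_+$. The constants $\Lambda,\mu,r,k,\gamma_1,\gamma_2>0$ and $v_1,v_2\ge0$; $\lambda=r+\mu$ and $\alpha_i=\gamma_i+v_i+\mu$. For $i=1,2$ the incidence functions satisfy: - (H1) $F_i(S,I_i)=I_if_i(S,I_i)$ with $F_i,f_i\in C^2(\mathbb{R}^2_+,\mathbb{R}_+)$ and $F_i(0,I_i)=F_i(S,0)=0$; - (H2) $\partial f_i/\partial S>0$ and $\partial f_i/\partial I_i\le0$; - (H3) $\lim_{I_i\to0^+}F_i(S,I_i)/I_i$ exists and is positive for $S>0$. Let $S^0=\Lambda/\lambda$ and $\sigma_2=\frac{\partial F_2}{\partial I_2}(S^0,0)$. Set $\mathcal{R}_2=\sigma_2/\alpha_2+\frac{kr\Lambda}{\alpha_2\mu\lambda}$. *)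

theory Defs
  imports "HOL-Analysis.Analysis"
begin

definition quad :: "(real \<times> real) set" where
  "quad = {0..} \<times> {0..}"

definition C1_on :: "(real \<times> real) set \<Rightarrow> (real \<times> real \<Rightarrow> real) \<Rightarrow> bool" where
  "C1_on A g \<longleftrightarrow> (\<exists>g1 g2. (\<forall>x\<in>A. (g has_derivative (\<lambda>h. g1 x * fst h + g2 x * snd h)) (at x within A))
      \<and> continuous_on A g1 \<and> continuous_on A g2)"

definition C2_on :: "(real \<times> real) set \<Rightarrow> (real \<times> real \<Rightarrow> real) \<Rightarrow> bool" where
  "C2_on A g \<longleftrightarrow> (\<exists>g1 g2. (\<forall>x\<in>A. (g has_derivative (\<lambda>h. g1 x * fst h + g2 x * snd h)) (at x within A))
      \<and> C1_on A g1 \<and> C1_on A g2)"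

text \<open>Hypotheses (H1)--(H3) on an incidence function F = I f.  Partial derivatives
  are one-sided (within the nonnegative half-line) so they make sense on the boundary.\<close>
definition incidence :: "(real \<Rightarrow> real \<Rightarrow> real) \<Rightarrow> (real \<Rightarrow> real \<Rightarrow> real) \<Rightarrow> bool" where
  "incidence F f \<longleftrightarrow>
     \<comment> \<open>(H1)\<close>
     (\<forall>S\<ge>0. \<forall>I\<ge>0. F S I = I * f S I \<and> F S I \<ge> 0 \<and> f S I \<ge> 0)
   \<and> C2_on quad (\<lambda>(S,I). F S I) \<and> C2_on quad (\<lambda>(S,I). f S I)
   \<and> (\<forall>I\<ge>0. F 0 I = 0) \<and> (\<forall>S\<ge>0. F S 0 = 0)
     \<comment> \<open>(H2)\<close>
   \<and> (\<forall>S\<ge>0. \<forall>I\<ge>0. \<forall>d. ((\<lambda>t. f t I) has_real_derivative d) (at S within {0..}) \<longrightarrow> d > 0)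
   \<and> (\<forall>S\<ge>0. \<forall>I\<ge>0. \<forall>d. ((\<lambda>t. f S t) has_real_derivative d) (at I within {0..}) \<longrightarrow> d \<le> 0)
     \<comment> \<open>(H3)\<close>
   \<and> (\<forall>S>0. \<exists>L>0. ((\<lambda>I. F S I / I) \<longlongrightarrow> L) (at_right 0))"

definition equilibrium ::
  "real \<Rightarrow> real \<Rightarrow> real \<Rightarrow> real \<Rightarrow> real \<Rightarrow> real \<Rightarrow> real \<Rightarrow> real \<Rightarrow>
   (real \<Rightarrow> real \<Rightarrow> real) \<Rightarrow> (real \<Rightarrow> real \<Rightarrow> real) \<Rightarrow>
   real \<Rightarrow> real \<Rightarrow> real \<Rightarrow> real \<Rightarrow> bool" where
  "equilibrium \<Lambda> \<mu> r k \<gamma>1 \<gamma>2 v1 v2 F1 F2 S V1 I1 I2 \<longleftrightarrow>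
     S \<ge> 0 \<and> V1 \<ge> 0 \<and> I1 \<ge> 0 \<and> I2 \<ge> 0
   \<and> \<Lambda> - F1 S I1 - F2 S I2 - (r + \<mu>) * S = 0
   \<and> r * S - (\<mu> + k * I2) * V1 = 0
   \<and> F1 S I1 - (\<gamma>1 + v1 + \<mu>) * I1 = 0
   \<and> F2 S I2 + k * I2 * V1 - (\<gamma>2 + v2 + \<mu>) * I2 = 0"

end

theory Submission
  imports Defs
begin

text \<open>For an equilibrium with \<open>I1 = 0\<close> and \<open>I2 = I > 0\<close>, the S-, V1- and I2-equations
  are linear in S, V1 and \<open>F2(S, I)\<close>; solving them gives \<open>S = S_of I\<close>, \<open>V1 = V_of I\<close> and
  \<open>F2(S, I) = I * rate_of I\<close> with \<open>rate_of I = \<alpha>2 - k * V_of I\<close>. So positive equilibria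
  correspond to roots \<open>0 < I < \<Lambda>/\<alpha>2\<close> of \<open>f2(S_of I, I) = rate_of I\<close>, whose right-hand side
  increases strictly. At a root, \<open>rate_of I > 0\<close>, and the identity
  \<open>\<Lambda> - \<lambda> * S_of I = I * rate_of I\<close> makes \<open>S_of\<close> decrease beyond it; by (H2) the left-hand side
  of a later root would then be smaller and its right-hand side larger, so the root is unique.
  At \<open>I = 0\<close> the two sides are \<open>f2(S0, 0) = \<sigma>2\<close> and \<open>\<alpha>2 - k r \<Lambda> / (\<mu> \<lambda>)\<close>: a root forces
  the first to exceed the second, which is \<open>R2 > 1\<close>, and conversely the intermediate value
  theorem on \<open>[0, \<Lambda>/\<alpha>2]\<close> then yields a root.\<close>

lemma has_real_derivative_partial_fst:
  fixes g :: "real \<times> real \<Rightarrow> real"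
  assumes "(g has_derivative (\<lambda>h. a * fst h + b * snd h)) (at (x, y) within A \<times> B)" "y \<in> B"
  shows "((\<lambda>t. g (t, y)) has_real_derivative a) (at x within A)"
proof -
  have pair: "((\<lambda>t. (t, y)) has_derivative (\<lambda>h. (h, 0))) (at x within A)"
    by (intro has_derivative_Pair has_derivative_ident has_derivative_const)
  have "(g has_derivative (\<lambda>h. a * fst h + b * snd h)) (at (x, y) within (\<lambda>t. (t, y)) ` A)"
    by (rule has_derivative_subset[OF assms(1)]) (use assms(2) in auto)
  from has_derivative_in_compose[OF pair, of g, OF this] show ?thesis
    by (simp add: has_field_derivative_def mult_commute_abs)
qed

lemma has_real_derivative_partial_snd:
  fixes g :: "real \<times> real \<Rightarrow> real"
  assumes "(g has_derivative (\<lambda>h. a * fst h + b * snd h)) (at (x, y) within A \<times> B)" "x \<in> A"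
  shows "((\<lambda>t. g (x, t)) has_real_derivative b) (at y within B)"
proof -
  have pair: "((\<lambda>t. (x, t)) has_derivative (\<lambda>h. (0, h))) (at y within B)"
    by (intro has_derivative_Pair has_derivative_ident has_derivative_const)
  have "(g has_derivative (\<lambda>h. a * fst h + b * snd h)) (at (x, y) within (\<lambda>t. (x, t)) ` B)"
    by (rule has_derivative_subset[OF assms(1)]) (use assms(2) in auto)
  from has_derivative_in_compose[OF pair, of g, OF this] show ?thesis
    by (simp add: has_field_derivative_def mult_commute_abs)
qed

lemma incidence_eq_mult:
  assumes "incidence F f" "S \<ge> 0" "I \<ge> 0"
  shows "F S I = I * f S I"
  using assms(1)[unfolded incidence_def, THEN conjunct1] assms(2,3) by simp

lemma incidence_C2_on:
  assumes "incidence F f"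
  shows "C2_on quad (\<lambda>(S, I). f S I)"
  using assms[unfolded incidence_def, THEN conjunct2, THEN conjunct2, THEN conjunct1] .

lemma incidence_vanishes_at_S_zero:
  assumes "incidence F f" "I > 0"
  shows "f 0 I = 0"
proof -
  have "F 0 I = 0"
    using assms(1)[unfolded incidence_def, THEN conjunct2, THEN conjunct2, THEN conjunct2, THEN conjunct1]
      assms(2) by simp
  then show ?thesis
    using incidence_eq_mult[OF assms(1), of 0 I] assms(2) by simp
qed

lemma incidence_partial_fst_pos:
  assumes "incidence F f" "S \<ge> 0" "I \<ge> 0"
    and "((\<lambda>t. f t I) has_real_derivative d) (at S within {0..})"
  shows "d > 0"
  using assms(1)[unfolded incidence_def, THEN conjunct2, THEN conjunct2, THEN conjunct2, THEN conjunct2,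
      THEN conjunct2, THEN conjunct1, rule_format, OF assms(2,3,4)] .

lemma incidence_partial_snd_nonpos:
  assumes "incidence F f" "S \<ge> 0" "I \<ge> 0"
    and "((\<lambda>t. f S t) has_real_derivative d) (at I within {0..})"
  shows "d \<le> 0"
  using assms(1)[unfolded incidence_def, THEN conjunct2, THEN conjunct2, THEN conjunct2, THEN conjunct2,
      THEN conjunct2, THEN conjunct2, THEN conjunct1, rule_format, OF assms(2,3,4)] .

lemma incidence_has_derivative:
  assumes "incidence F f" "S \<ge> 0" "I \<ge> 0"
  obtains a b where "((\<lambda>(S, I). f S I) has_derivative (\<lambda>h. a * fst h + b * snd h))
    (at (S, I) within {0..} \<times> {0..})"
proof -
  obtain g1 g2 where d: "\<forall>x\<in>quad.
      ((\<lambda>(S, I). f S I) has_derivative (\<lambda>h. g1 x * fst h + g2 x * snd h)) (at x within quad)"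
    using incidence_C2_on[OF assms(1)] unfolding C2_on_def by blast
  have "(S, I) \<in> quad"
    using assms(2,3) by (simp add: quad_def)
  with d have "((\<lambda>(S, I). f S I) has_derivative (\<lambda>h. g1 (S, I) * fst h + g2 (S, I) * snd h))
      (at (S, I) within quad)"
    by blast
  then show ?thesis
    unfolding quad_def by (rule that)
qed

lemma incidence_partial_fst:
  assumes "incidence F f" "S \<ge> 0" "I \<ge> 0"
  obtains a where "((\<lambda>t. f t I) has_real_derivative a) (at S within {0..})"
proof -
  obtain a b where "((\<lambda>(S, I). f S I) has_derivative (\<lambda>h. a * fst h + b * snd h))
      (at (S, I) within {0..} \<times> {0..})"
    by (rule incidence_has_derivative[OF assms])
  from has_real_derivative_partial_fst[OF this] assms(3)
  have "((\<lambda>t. f t I) has_real_derivative a) (at S within {0..})"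
    by simp
  then show ?thesis
    by (rule that)
qed

lemma incidence_partial_snd:
  assumes "incidence F f" "S \<ge> 0" "I \<ge> 0"
  obtains b where "((\<lambda>t. f S t) has_real_derivative b) (at I within {0..})"
proof -
  obtain a b where "((\<lambda>(S, I). f S I) has_derivative (\<lambda>h. a * fst h + b * snd h))
      (at (S, I) within {0..} \<times> {0..})"
    by (rule incidence_has_derivative[OF assms])
  from has_real_derivative_partial_snd[OF this] assms(2)
  have "((\<lambda>t. f S t) has_real_derivative b) (at I within {0..})"
    by simp
  then show ?thesis
    by (rule that)
qed

lemma incidence_continuous_on_curve:
  assumes "incidence F f" "continuous_on T u" "continuous_on T v"
    and "\<And>x. x \<in> T \<Longrightarrow> u x \<ge> 0 \<and> v x \<ge> 0"
  shows "continuous_on T (\<lambda>x. f (u x) (v x))"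
proof -
  obtain g1 g2 where "\<And>x. x \<in> quad \<Longrightarrow>
      ((\<lambda>(S, I). f S I) has_derivative (\<lambda>h. g1 x * fst h + g2 x * snd h)) (at x within quad)"
    using incidence_C2_on[OF assms(1)] unfolding C2_on_def by blast
  then have "continuous_on quad (\<lambda>(S, I). f S I)"
    by (rule has_derivative_continuous_on)
  from continuous_on_compose2[OF this continuous_on_Pair[OF assms(2,3)]] assms(4)
  show ?thesis
    by (auto simp: quad_def)
qed

lemma incidence_strict_mono_fst:
  assumes "incidence F f" "I \<ge> 0" "0 \<le> S1" "S1 < S2"
  shows "f S1 I < f S2 I"
proof (rule DERIV_pos_imp_increasing_open[where f = "\<lambda>t. f t I", OF \<open>S1 < S2\<close>])
  fix S
  assume "S1 < S" "S < S2"
  then have "S > 0"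
    using assms(3) by linarith
  obtain d where d: "((\<lambda>t. f t I) has_real_derivative d) (at S within {0..})"
    by (rule incidence_partial_fst[OF assms(1) less_imp_le[OF \<open>S > 0\<close>] assms(2)])
  moreover have "at S within {0..} = at S"
    using \<open>S > 0\<close> by (intro at_within_interior) simp
  ultimately have "DERIV (\<lambda>t. f t I) S :> d"
    by simp
  moreover have "d > 0"
    using incidence_partial_fst_pos[OF assms(1) less_imp_le[OF \<open>S > 0\<close>] assms(2) d] .
  ultimately show "\<exists>y. DERIV (\<lambda>t. f t I) S :> y \<and> y > 0"
    by blast
next
  show "continuous_on {S1..S2} (\<lambda>t. f t I)"
    by (rule incidence_continuous_on_curve[OF assms(1) continuous_on_id continuous_on_const])
      (use assms in auto)
qed

lemma incidence_antimono_snd: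
  assumes "incidence F f" "S \<ge> 0" "0 \<le> I1" "I1 \<le> I2"
  shows "f S I2 \<le> f S I1"
proof (rule DERIV_nonpos_imp_decreasing_open[where f = "\<lambda>t. f S t", OF \<open>I1 \<le> I2\<close>])
  fix I
  assume "I1 < I" "I < I2"
  then have "I > 0"
    using assms(3) by linarith
  obtain d where d: "((\<lambda>t. f S t) has_real_derivative d) (at I within {0..})"
    by (rule incidence_partial_snd[OF assms(1,2) less_imp_le[OF \<open>I > 0\<close>]])
  moreover have "at I within {0..} = at I"
    using \<open>I > 0\<close> by (intro at_within_interior) simp
  ultimately have "DERIV (\<lambda>t. f S t) I :> d"
    by simp
  moreover have "d \<le> 0"
    using incidence_partial_snd_nonpos[OF assms(1,2) less_imp_le[OF \<open>I > 0\<close>] d] .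
  ultimately show "\<exists>y. DERIV (\<lambda>t. f S t) I :> y \<and> y \<le> 0"
    by blast
next
  show "continuous_on {I1..I2} (\<lambda>t. f S t)"
    by (rule incidence_continuous_on_curve[OF assms(1) continuous_on_const continuous_on_id])
      (use assms in auto)
qed

lemma incidence_initial_slope:
  assumes "incidence F f" "S \<ge> 0"
    and "((\<lambda>I. F S I) has_real_derivative \<sigma>) (at 0 within {0..})"
  shows "f S 0 = \<sigma>"
proof -
  obtain fI where "((\<lambda>t. f S t) has_real_derivative fI) (at 0 within {0..})"
    by (rule incidence_partial_snd[OF assms(1,2) order_refl])
  from DERIV_mult[OF DERIV_ident this]
  have "((\<lambda>I. I * f S I) has_real_derivative f S 0) (at 0 within {0..})"
    by simp
  then have "((\<lambda>I. F S I) has_real_derivative f S 0) (at 0 within {0..})"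
    by (rule has_field_derivative_transform_within[OF _ zero_less_one])
      (use incidence_eq_mult[OF assms(1,2)] in auto)
  then show ?thesis
    using has_field_derivative_unique[OF _ assms(3)] by (simp add: at_within_Ici_at_right)
qed

text \<open>The parameter \<open>\<alpha>\<close> of the locale stands for \<open>\<alpha>2 = \<gamma>2 + v2 + \<mu>\<close>.\<close>

locale reduced_equilibrium =
  fixes \<Lambda> \<mu> r k \<alpha> :: real
  assumes \<Lambda>_pos: "\<Lambda> > 0" and \<mu>_pos: "\<mu> > 0" and r_pos: "r > 0" and k_pos: "k > 0"
    and \<alpha>_pos: "\<alpha> > 0"
begin

definition S_of :: "real \<Rightarrow> real" where
  "S_of I = (\<mu> + k * I) * (\<Lambda> - \<alpha> * I) / (\<mu> * (r + \<mu> + k * I))"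

definition V_of :: "real \<Rightarrow> real" where
  "V_of I = r * (\<Lambda> - \<alpha> * I) / (\<mu> * (r + \<mu> + k * I))"

definition rate_of :: "real \<Rightarrow> real" where
  "rate_of I = \<alpha> - k * V_of I"

lemma denominators_pos:
  assumes "I \<ge> 0"
  shows "\<mu> + k * I > 0" "r + \<mu> + k * I > 0" "\<mu> * (r + \<mu> + k * I) > 0"
  using assms \<mu>_pos r_pos k_pos by (simp_all add: add_pos_nonneg)

lemma V_of_mult: "(\<mu> + k * I) * V_of I = r * S_of I"
  by (simp add: S_of_def V_of_def)

lemma S_of_balance:
  assumes "I \<ge> 0"
  shows "\<Lambda> - (r + \<mu>) * S_of I = I * rate_of I"
  using denominators_pos[OF assms]
  by (simp add: S_of_def rate_of_def V_of_def field_simps)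

lemma S_of_eq_factor: "S_of I = (\<mu> + k * I) / (\<mu> * (r + \<mu> + k * I)) * (\<Lambda> - \<alpha> * I)"
  by (simp add: S_of_def)

lemma V_of_eq_factor: "V_of I = r / (\<mu> * (r + \<mu> + k * I)) * (\<Lambda> - \<alpha> * I)"
  by (simp add: V_of_def)

lemma S_of_pos_iff:
  assumes "I \<ge> 0"
  shows "S_of I > 0 \<longleftrightarrow> I < \<Lambda> / \<alpha>"
proof -
  have "(\<mu> + k * I) / (\<mu> * (r + \<mu> + k * I)) > 0"
    using denominators_pos[OF assms] by simp
  then have "S_of I > 0 \<longleftrightarrow> \<Lambda> - \<alpha> * I > 0"
    unfolding S_of_eq_factor by (metis zero_less_mult_pos mult_pos_pos)
  also have "\<dots> \<longleftrightarrow> I < \<Lambda> / \<alpha>"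
    using \<alpha>_pos by (simp add: field_simps)
  finally show ?thesis .
qed

lemma S_of_nonneg:
  assumes "0 \<le> I" "I \<le> \<Lambda> / \<alpha>"
  shows "S_of I \<ge> 0"
proof -
  have "(\<mu> + k * I) / (\<mu> * (r + \<mu> + k * I)) > 0"
    using denominators_pos[OF assms(1)] by simp
  moreover have "\<Lambda> - \<alpha> * I \<ge> 0"
    using assms(2) \<alpha>_pos by (simp add: field_simps)
  ultimately show ?thesis
    unfolding S_of_eq_factor by (simp add: mult_nonneg_nonneg less_imp_le del: times_divide_eq_left)
qed

lemma V_of_pos:
  assumes "0 \<le> I" "I < \<Lambda> / \<alpha>"
  shows "V_of I > 0"
proof -
  have "r / (\<mu> * (r + \<mu> + k * I)) > 0"
    using denominators_pos[OF assms(1)] r_pos by simp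
  moreover have "\<Lambda> - \<alpha> * I > 0"
    using assms(2) \<alpha>_pos by (simp add: field_simps)
  ultimately show ?thesis
    unfolding V_of_eq_factor by (rule mult_pos_pos)
qed

lemma S_of_zero: "S_of 0 = \<Lambda> / (r + \<mu>)"
  using \<mu>_pos by (simp add: S_of_def)

lemma S_of_top: "S_of (\<Lambda> / \<alpha>) = 0"
  using \<alpha>_pos by (simp add: S_of_def)

lemma rate_of_top: "rate_of (\<Lambda> / \<alpha>) = \<alpha>"
  using \<alpha>_pos by (simp add: rate_of_def V_of_def)

lemma V_of_strict_antimono:
  assumes "0 \<le> I1" "I1 < I2"
  shows "V_of I2 < V_of I1"
proof -
  define D1 D2 where "D1 = \<mu> * (r + \<mu> + k * I1)" and "D2 = \<mu> * (r + \<mu> + k * I2)"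
  have "D1 > 0" "D2 > 0"
    unfolding D1_def D2_def using denominators_pos assms by auto
  have "V_of I1 - V_of I2 = (r * (\<Lambda> - \<alpha> * I1) * D2 - r * (\<Lambda> - \<alpha> * I2) * D1) / (D1 * D2)"
    unfolding V_of_def D1_def[symmetric] D2_def[symmetric]
    by (rule diff_frac_eq) (use \<open>D1 > 0\<close> \<open>D2 > 0\<close> in simp_all)
  also have "r * (\<Lambda> - \<alpha> * I1) * D2 - r * (\<Lambda> - \<alpha> * I2) * D1
      = r * \<mu> * (I2 - I1) * (\<alpha> * (r + \<mu>) + k * \<Lambda>)"
    unfolding D1_def D2_def by (simp add: algebra_simps)
  finally have "V_of I1 - V_of I2 = r * \<mu> * (I2 - I1) * (\<alpha> * (r + \<mu>) + k * \<Lambda>) / (D1 * D2)" .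
  moreover have "r * \<mu> * (I2 - I1) * (\<alpha> * (r + \<mu>) + k * \<Lambda>) / (D1 * D2) > 0"
    using assms \<open>D1 > 0\<close> \<open>D2 > 0\<close> r_pos \<mu>_pos k_pos \<Lambda>_pos \<alpha>_pos
    by (intro divide_pos_pos mult_pos_pos add_pos_pos) simp_all
  ultimately show ?thesis
    by simp
qed

lemma rate_of_strict_mono:
  assumes "0 \<le> I1" "I1 < I2"
  shows "rate_of I1 < rate_of I2"
  using V_of_strict_antimono[OF assms] k_pos by (simp add: rate_of_def)

lemma S_of_strict_antimono:
  assumes "0 \<le> I1" "I1 < I2" "rate_of I1 > 0"
  shows "S_of I2 < S_of I1"
proof -
  have "I1 * rate_of I1 < I2 * rate_of I1"
    using assms by simp
  also have "\<dots> \<le> I2 * rate_of I2"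
    using rate_of_strict_mono[OF assms(1,2)] assms by simp
  finally have "(r + \<mu>) * S_of I2 < (r + \<mu>) * S_of I1"
    using S_of_balance[of I1] S_of_balance[of I2] assms by simp
  then show ?thesis
    using r_pos \<mu>_pos by simp
qed

lemma continuous_on_S_of: "continuous_on {0..} S_of"
  unfolding S_of_def
  by (intro continuous_intros) (use denominators_pos in \<open>auto simp: less_imp_neq[symmetric]\<close>)

lemma continuous_on_rate_of: "continuous_on {0..} rate_of"
  unfolding rate_of_def V_of_def
  by (intro continuous_intros) (use denominators_pos in \<open>auto simp: less_imp_neq[symmetric]\<close>)

lemma reproduction_number_gt_one_iff:
  "\<sigma> / \<alpha> + k * r * \<Lambda> / (\<alpha> * \<mu> * (r + \<mu>)) > 1 \<longleftrightarrow> rate_of 0 < \<sigma>"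
proof -
  have "k * r * \<Lambda> / (\<alpha> * \<mu> * (r + \<mu>)) = k * V_of 0 / \<alpha>"
    by (simp add: V_of_def ac_simps)
  then have "\<sigma> / \<alpha> + k * r * \<Lambda> / (\<alpha> * \<mu> * (r + \<mu>)) = (\<sigma> + k * V_of 0) / \<alpha>"
    by (simp add: add_divide_distrib)
  then show ?thesis
    using \<alpha>_pos by (simp add: rate_of_def diff_less_eq)
qed

lemma reduced_equations_iff:
  assumes "I > 0"
  shows "\<Lambda> - F - (r + \<mu>) * S = 0 \<and> r * S - (\<mu> + k * I) * V = 0 \<and> F + k * I * V - \<alpha> * I = 0
    \<longleftrightarrow> S = S_of I \<and> V = V_of I \<and> F = I * rate_of I"
proof
  assume eqs: "\<Lambda> - F - (r + \<mu>) * S = 0 \<and> r * S - (\<mu> + k * I) * V = 0 \<and> F + k * I * V - \<alpha> * I = 0"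
  note den = denominators_pos[OF less_imp_le[OF assms]]
  have "(\<mu> + k * I) * (\<Lambda> - \<alpha> * I) - S * (\<mu> * (r + \<mu> + k * I))
      = (\<mu> + k * I) * (\<Lambda> - F - (r + \<mu>) * S) + (\<mu> + k * I) * (F + k * I * V - \<alpha> * I)
        + k * I * (r * S - (\<mu> + k * I) * V)"
    by (simp add: algebra_simps)
  then have "S * (\<mu> * (r + \<mu> + k * I)) = (\<mu> + k * I) * (\<Lambda> - \<alpha> * I)"
    using eqs by simp
  then have S: "S = S_of I"
    using den by (simp add: S_of_def field_simps)
  have "(\<mu> + k * I) * V = r * S"
    using eqs by simp
  also have "\<dots> = (\<mu> + k * I) * V_of I"
    using S V_of_mult[of I] by simp
  finally have V: "V = V_of I"
    using den(1) by simp
  from eqs have "F = \<alpha> * I - k * I * V"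
    by linarith
  with V have "F = I * rate_of I"
    by (simp add: rate_of_def algebra_simps)
  with S V show "S = S_of I \<and> V = V_of I \<and> F = I * rate_of I"
    by simp
next
  assume "S = S_of I \<and> V = V_of I \<and> F = I * rate_of I"
  then have S: "S = S_of I" and V: "V = V_of I" and F: "F = I * rate_of I"
    by simp_all
  have "\<Lambda> - F - (r + \<mu>) * S = 0"
    using S_of_balance[OF less_imp_le[OF assms]] S F by simp
  moreover have "r * S - (\<mu> + k * I) * V = 0"
    using V_of_mult[of I] S V by simp
  moreover have "F + k * I * V - \<alpha> * I = 0"
    using F V by (simp add: rate_of_def algebra_simps)
  ultimately show "\<Lambda> - F - (r + \<mu>) * S = 0 \<and> r * S - (\<mu> + k * I) * V = 0 \<and> F + k * I * V - \<alpha> * I = 0"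
    by blast
qed

definition reduced_root :: "(real \<Rightarrow> real \<Rightarrow> real) \<Rightarrow> real \<Rightarrow> bool" where
  "reduced_root f I \<longleftrightarrow> 0 < I \<and> I < \<Lambda> / \<alpha> \<and> f (S_of I) I = rate_of I"

lemma positive_equilibrium_iff:
  assumes "incidence F1 f1" "incidence F2 f2" "\<gamma>2 + v2 + \<mu> = \<alpha>"
  shows "S > 0 \<and> V > 0 \<and> I > 0 \<and> equilibrium \<Lambda> \<mu> r k \<gamma>1 \<gamma>2 v1 v2 F1 F2 S V 0 I
    \<longleftrightarrow> reduced_root f2 I \<and> S = S_of I \<and> V = V_of I"
proof
  assume H: "S > 0 \<and> V > 0 \<and> I > 0 \<and> equilibrium \<Lambda> \<mu> r k \<gamma>1 \<gamma>2 v1 v2 F1 F2 S V 0 I"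
  then have "S > 0" "I > 0"
    by simp_all
  have "F1 S 0 = 0"
    using incidence_eq_mult[OF assms(1), of S 0] \<open>S > 0\<close> by simp
  with H have "\<Lambda> - F2 S I - (r + \<mu>) * S = 0 \<and> r * S - (\<mu> + k * I) * V = 0 \<and> F2 S I + k * I * V - \<alpha> * I = 0"
    using assms(3) unfolding equilibrium_def by simp
  then have sol: "S = S_of I \<and> V = V_of I \<and> F2 S I = I * rate_of I"
    by (rule reduced_equations_iff[OF \<open>I > 0\<close>, THEN iffD1])
  moreover have "I * f2 S I = F2 S I"
    using incidence_eq_mult[OF assms(2), of S I] \<open>S > 0\<close> \<open>I > 0\<close> by simp
  ultimately show "reduced_root f2 I \<and> S = S_of I \<and> V = V_of I"
    using S_of_pos_iff[of I] \<open>S > 0\<close> \<open>I > 0\<close> unfolding reduced_root_def by auto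
next
  assume H: "reduced_root f2 I \<and> S = S_of I \<and> V = V_of I"
  then have "I > 0" "S > 0" "V > 0"
    using S_of_pos_iff[of I] V_of_pos[of I] unfolding reduced_root_def by auto
  have "F1 S 0 = 0"
    using incidence_eq_mult[OF assms(1), of S 0] \<open>S > 0\<close> by simp
  moreover have "F2 S I = I * rate_of I"
    using H incidence_eq_mult[OF assms(2), of S I] \<open>S > 0\<close> \<open>I > 0\<close> unfolding reduced_root_def by simp
  with H have "\<Lambda> - F2 S I - (r + \<mu>) * S = 0 \<and> r * S - (\<mu> + k * I) * V = 0 \<and> F2 S I + k * I * V - \<alpha> * I = 0"
    by (intro reduced_equations_iff[OF \<open>I > 0\<close>, THEN iffD2]) simp
  ultimately show "S > 0 \<and> V > 0 \<and> I > 0 \<and> equilibrium \<Lambda> \<mu> r k \<gamma>1 \<gamma>2 v1 v2 F1 F2 S V 0 I"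
    using \<open>I > 0\<close> \<open>S > 0\<close> \<open>V > 0\<close> assms(3) unfolding equilibrium_def by simp
qed

lemma reduced_root_rate_pos:
  assumes "incidence F f" "reduced_root f I"
  shows "rate_of I > 0"
proof -
  have "S_of I > 0" "I > 0"
    using assms(2) S_of_pos_iff[of I] unfolding reduced_root_def by auto
  then have "f 0 I < f (S_of I) I"
    using incidence_strict_mono_fst[OF assms(1)] by simp
  then show ?thesis
    using assms(2) incidence_vanishes_at_S_zero[OF assms(1) \<open>I > 0\<close>] unfolding reduced_root_def by simp
qed

lemma reduced_root_imp_threshold:
  assumes "incidence F f" "reduced_root f I"
  shows "rate_of 0 < f (\<Lambda> / (r + \<mu>)) 0"
proof -
  have I: "0 < I" "I < \<Lambda> / \<alpha>" and root: "f (S_of I) I = rate_of I"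
    using assms(2) unfolding reduced_root_def by auto
  have S_nonneg: "S_of I \<ge> 0"
    using S_of_nonneg I by simp
  have "(r + \<mu>) * S_of I < \<Lambda>"
    using S_of_balance[OF less_imp_le[OF I(1)]] mult_pos_pos[OF I(1) reduced_root_rate_pos[OF assms]]
    by simp
  then have S_below: "S_of I < \<Lambda> / (r + \<mu>)"
    using r_pos \<mu>_pos by (simp add: pos_less_divide_eq mult.commute)
  have "rate_of 0 < rate_of I"
    using rate_of_strict_mono I by simp
  also have "\<dots> = f (S_of I) I"
    using root by simp
  also have "\<dots> \<le> f (S_of I) 0"
    using incidence_antimono_snd[OF assms(1) S_nonneg] I by simp
  also have "\<dots> < f (\<Lambda> / (r + \<mu>)) 0"
    using incidence_strict_mono_fst[OF assms(1) order_refl S_nonneg S_below] .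
  finally show ?thesis .
qed

lemma reduced_root_unique:
  assumes "incidence F f" "reduced_root f I1" "reduced_root f I2"
  shows "I1 = I2"
proof -
  have False if "reduced_root f J1" "reduced_root f J2" "J1 < J2" for J1 J2
  proof -
    have J: "0 < J1" "J2 < \<Lambda> / \<alpha>" and roots: "f (S_of J1) J1 = rate_of J1" "f (S_of J2) J2 = rate_of J2"
      using that unfolding reduced_root_def by auto
    have S_nonneg: "S_of J2 \<ge> 0"
      using S_of_nonneg J that(3) by simp
    have "S_of J2 < S_of J1"
      using S_of_strict_antimono reduced_root_rate_pos[OF assms(1) that(1)] J that(3) by simp
    have "rate_of J2 = f (S_of J2) J2"
      using roots by simp
    also have "\<dots> \<le> f (S_of J2) J1"
      using incidence_antimono_snd[OF assms(1) S_nonneg] J that(3) by simp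
    also have "\<dots> < f (S_of J1) J1"
      using incidence_strict_mono_fst[OF assms(1) _ S_nonneg \<open>S_of J2 < S_of J1\<close>] J by simp
    also have "\<dots> = rate_of J1"
      using roots by simp
    finally show False
      using rate_of_strict_mono[OF less_imp_le[OF J(1)] that(3)] by simp
  qed
  then show ?thesis
    using assms(2,3) by (metis linorder_neqE_linordered_idom)
qed

lemma reduced_root_exists:
  assumes "incidence F f" "rate_of 0 < f (\<Lambda> / (r + \<mu>)) 0"
  obtains I where "reduced_root f I"
proof -
  define D where "D I = f (S_of I) I - rate_of I" for I
  have top: "0 < \<Lambda> / \<alpha>"
    using \<Lambda>_pos \<alpha>_pos by simp
  have "continuous_on {0..\<Lambda> / \<alpha>} S_of"
    by (rule continuous_on_subset[OF continuous_on_S_of]) auto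
  then have "continuous_on {0..\<Lambda> / \<alpha>} (\<lambda>I. f (S_of I) I)"
    by (rule incidence_continuous_on_curve[OF assms(1) _ continuous_on_id]) (simp add: S_of_nonneg)
  moreover have "continuous_on {0..\<Lambda> / \<alpha>} rate_of"
    by (rule continuous_on_subset[OF continuous_on_rate_of]) auto
  ultimately have "continuous_on {0..\<Lambda> / \<alpha>} D"
    unfolding D_def by (rule continuous_on_diff)
  moreover have D_top: "D (\<Lambda> / \<alpha>) < 0"
    using incidence_vanishes_at_S_zero[OF assms(1) top] S_of_top rate_of_top \<alpha>_pos by (simp add: D_def)
  moreover have D_zero: "D 0 > 0"
    using assms(2) S_of_zero by (simp add: D_def)
  ultimately obtain I where I: "0 \<le> I" "I \<le> \<Lambda> / \<alpha>" "D I = 0"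
    using IVT2'[of D "\<Lambda> / \<alpha>" 0 0] top by auto
  then have "I \<noteq> 0" "I \<noteq> \<Lambda> / \<alpha>"
    using D_top D_zero by auto
  with I have "reduced_root f I"
    unfolding reduced_root_def D_def by simp
  then show ?thesis
    by (rule that)
qed

lemma ex1_reduced_root_iff:
  assumes "incidence F f" "((\<lambda>I. F (\<Lambda> / (r + \<mu>)) I) has_real_derivative \<sigma>) (at 0 within {0..})"
  shows "(\<exists>!I. reduced_root f I) \<longleftrightarrow> rate_of 0 < \<sigma>"
proof -
  have "f (\<Lambda> / (r + \<mu>)) 0 = \<sigma>"
    using incidence_initial_slope[OF assms(1) _ assms(2)] \<Lambda>_pos r_pos \<mu>_pos by simp
  then show ?thesis
    using reduced_root_imp_threshold[OF assms(1)] reduced_root_exists[OF assms(1)]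
      reduced_root_unique[OF assms(1)] by metis
qed

end

lemma ex1_triple_graph_iff:
  assumes "\<And>a b c. P a b c \<longleftrightarrow> Q c \<and> a = f c \<and> b = g c"
  shows "(\<exists>!p. case p of (a, b, c) \<Rightarrow> P a b c) \<longleftrightarrow> (\<exists>!c. Q c)"
  unfolding assms by (auto simp: Ex1_def)

theorem mainTheorem5:
  fixes \<Lambda> \<mu> r k \<gamma>1 \<gamma>2 v1 v2 \<sigma>2 :: real
    and F1 f1 F2 f2 :: "real \<Rightarrow> real \<Rightarrow> real"
  assumes "\<Lambda> > 0" "\<mu> > 0" "r > 0" "k > 0" "\<gamma>1 > 0" "\<gamma>2 > 0" "v1 \<ge> 0" "v2 \<ge> 0"
    and "incidence F1 f1" and "incidence F2 f2"
    and sigma2: "((\<lambda>I. F2 (\<Lambda> / (r + \<mu>)) I) has_real_derivative \<sigma>2) (at 0 within {0..})"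
    and dS: "\<forall>S\<ge>0. \<forall>I\<ge>0. \<forall>d. ((\<lambda>t. F2 t I) has_real_derivative d) (at S within {0..}) \<longrightarrow> d \<le> I"
  shows "(\<exists>!p. case p of (S, V1, I2) \<Rightarrow>
             S > 0 \<and> V1 > 0 \<and> I2 > 0 \<and> equilibrium \<Lambda> \<mu> r k \<gamma>1 \<gamma>2 v1 v2 F1 F2 S V1 0 I2)
         \<longleftrightarrow> \<sigma>2 / (\<gamma>2 + v2 + \<mu>) + k * r * \<Lambda> / ((\<gamma>2 + v2 + \<mu>) * \<mu> * (r + \<mu>)) > 1"
proof -
  interpret reduced_equilibrium \<Lambda> \<mu> r k "\<gamma>2 + v2 + \<mu>"
    using assms(1-8) by unfold_locales simp_all
  have "(\<exists>!p. case p of (S, V1, I2) \<Rightarrow>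
             S > 0 \<and> V1 > 0 \<and> I2 > 0 \<and> equilibrium \<Lambda> \<mu> r k \<gamma>1 \<gamma>2 v1 v2 F1 F2 S V1 0 I2)
      \<longleftrightarrow> (\<exists>!I. reduced_root f2 I)"
    by (rule ex1_triple_graph_iff) (rule positive_equilibrium_iff[OF assms(9,10) refl])
  also have "\<dots> \<longleftrightarrow> rate_of 0 < \<sigma>2"
    by (rule ex1_reduced_root_iff[OF assms(10) sigma2])
  also have "\<dots> \<longleftrightarrow> \<sigma>2 / (\<gamma>2 + v2 + \<mu>) + k * r * \<Lambda> / ((\<gamma>2 + v2 + \<mu>) * \<mu> * (r + \<mu>)) > 1"
    by (rule reproduction_number_gt_one_iff[symmetric])
  finally show ?thesis .
qed

end
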